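(* Let $D$ be an integral domain which is a P$\star$MD for some semistar operation $\star$ on $D$. Then: (a) every overring $T$ of $D$ is a P$\dot\star^T$MD; (b) every overring of $D$ that is $t$-linked to $(D,\star)$ is a P$v$MD; in particular $D^{[\star]}$ is a P$v$MD and, if moreover $(D:_KD^\star)\ne(0)$, the complete integral closure $\widetilde D$ of $D$ is a P$v$MD.
   Context: Let $D$ be an integral domain with quotient field $K$. $\overline{\mathbf F}(D)$ denotes the set of all nonzero $D$-submodules of $K$ and $\mathbf f(D)$ the set of nonzero finitely generated $D$-submodules of $K$. A semistar operation on $D$ is a map $\star:\overline{\mathbf F}(D)\to\overline{\mathbf F}(D)$, $E\mapsto E^\star$, such that for all $0\ne x\in K$ and $E,F\in\overline{\mathbf F}(D)$: (1) $(xE)^\star=xE^\star$; (2) $E\subseteq F\Rightarrow E^\star\subseteq F^\star$; (3) $E\subseteq E^\star$ and $(E^\star)^\star=E^\star$. $\star_f$ is defined by $E^{\star_f}=\bigcup\{F^\star:F\in\mathbf f(D),F\subseteq E\}$. An overring of $D$ is a ring $T$ with $D\subseteq T\subseteq K$; semistar operations on $T$ are defined analogously. For an overring $T$, $\dot\star^T$ is the semistar operation on $T$ given by $E\mapsto E^\star$; $v_T$ is $E\mapsto(T:_K(T:_KE))$ and $t_T:=(v_T)_f$. $T$ is $(\star,\star')$-linked to $D$ if for every nonzero finitely generated ideal $F\subseteq D$ with $F^\star=D^\star$ one has $(FT)^{\star'}=T^{\star'}$; $T$ is $t$-linked to $(D,\star)$ if it is $(\star,t_T)$-linked to $D$. For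 a semistar operation $\ast$ on a domain $R$ (here $R=D$ or an overring), $R$ is a P$\ast$MD if every nonzero finitely generated $R$-submodule $F$ of $K$ satisfies $(F(R:_KF))^{\ast_f}=R^\ast$; a P$v$MD is a P$v_R$MD. $D^{[\star]}:=\bigcup\{(H^\star:_KH^\star):H\in\mathbf f(D)\}$. The complete integral closure of $D$ is $\widetilde D=\bigcup\{(E:_KE): E$ a nonzero fractional ideal of $D\}$. *)

theory Defs
  imports Main
begin

text \<open>The quotient field K is modelled as the ambient type 'a::field; the domain D
and its overrings are subsets of it.\<close>

definition subring :: "'a::field set \<Rightarrow> bool" where
  "subring R \<longleftrightarrow> 0 \<in> R \<and> 1 \<in> R \<and> (\<forall>x\<in>R. \<forall>y\<in>R. x + y \<in> R \<and> - x \<in> R \<and> x * y \<in> R)"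

definition quotient_field_of :: "'a::field set \<Rightarrow> bool" where
  "quotient_field_of R \<longleftrightarrow> (\<forall>x::'a. \<exists>a\<in>R. \<exists>b\<in>R. b \<noteq> 0 \<and> x = a / b)"

definition overring :: "'a::field set \<Rightarrow> 'a set \<Rightarrow> bool" where
  "overring D T \<longleftrightarrow> subring T \<and> D \<subseteq> T"

definition submod :: "'a::field set \<Rightarrow> 'a set \<Rightarrow> bool" where
  "submod R E \<longleftrightarrow> 0 \<in> E \<and> (\<forall>x\<in>E. \<forall>y\<in>E. x + y \<in> E) \<and> (\<forall>r\<in>R. \<forall>x\<in>E. r * x \<in> E)"

definition Fbar :: "'a::field set \<Rightarrow> 'a set set" where
  "Fbar R = {E. submod R E \<and> E \<noteq> {0}}"

definition gen :: "'a::field set \<Rightarrow> 'a set \<Rightarrow> 'a set" where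
  "gen R S = {\<Sum>s\<in>S. c s * s | c. \<forall>s\<in>S. c s \<in> R}"

definition fgmod :: "'a::field set \<Rightarrow> 'a set set" where
  "fgmod R = {E. \<exists>S. finite S \<and> E = gen R S \<and> E \<noteq> {0}}"

definition smul :: "'a::field \<Rightarrow> 'a set \<Rightarrow> 'a set" where
  "smul x E = (\<lambda>e. x * e) ` E"

definition semistar :: "'a::field set \<Rightarrow> ('a set \<Rightarrow> 'a set) \<Rightarrow> bool" where
  "semistar R st \<longleftrightarrow>
     (\<forall>E\<in>Fbar R. st E \<in> Fbar R) \<and>
     (\<forall>x E. x \<noteq> 0 \<longrightarrow> E \<in> Fbar R \<longrightarrow> st (smul x E) = smul x (st E)) \<and>
     (\<forall>E G. E \<in> Fbar R \<longrightarrow> G \<in> Fbar R \<longrightarrow> E \<subseteq> G \<longrightarrow> st E \<subseteq> st G) \<and>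
     (\<forall>E\<in>Fbar R. E \<subseteq> st E \<and> st (st E) = st E)"

definition star_f :: "'a::field set \<Rightarrow> ('a set \<Rightarrow> 'a set) \<Rightarrow> 'a set \<Rightarrow> 'a set" where
  "star_f R st E = \<Union>{st G | G. G \<in> fgmod R \<and> G \<subseteq> E}"

definition kcolon :: "'a::field set \<Rightarrow> 'a set \<Rightarrow> 'a set" where
  "kcolon A B = {x. \<forall>b\<in>B. x * b \<in> A}"

definition modprod :: "'a::field set \<Rightarrow> 'a set \<Rightarrow> 'a set" where
  "modprod A B = {\<Sum>i<n. f i * g i | (n::nat) f g. \<forall>i<n. f i \<in> A \<and> g i \<in> B}"

definition PMD :: "'a::field set \<Rightarrow> ('a set \<Rightarrow> 'a set) \<Rightarrow> bool" where
  "PMD R st \<longleftrightarrow> (\<forall>X. X \<in> fgmod R \<longrightarrow> star_f R st (modprod X (kcolon R X)) = st R)"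

definition v_op :: "'a::field set \<Rightarrow> 'a set \<Rightarrow> 'a set" where
  "v_op R E = kcolon R (kcolon R E)"

definition t_op :: "'a::field set \<Rightarrow> 'a set \<Rightarrow> 'a set" where
  "t_op R = star_f R (v_op R)"

definition PvMD :: "'a::field set \<Rightarrow> bool" where
  "PvMD R \<longleftrightarrow> PMD R (v_op R)"

definition t_linked :: "'a::field set \<Rightarrow> ('a set \<Rightarrow> 'a set) \<Rightarrow> 'a set \<Rightarrow> bool" where
  "t_linked D st T \<longleftrightarrow>
     (\<forall>G. G \<in> fgmod D \<and> G \<subseteq> D \<and> st G = st D \<longrightarrow> t_op T (modprod G T) = t_op T T)"

definition star_bracket :: "'a::field set \<Rightarrow> ('a set \<Rightarrow> 'a set) \<Rightarrow> 'a set" where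
  "star_bracket D st = \<Union>{kcolon (st H) (st H) | H. H \<in> fgmod D}"

definition frac_ideal :: "'a::field set \<Rightarrow> 'a set \<Rightarrow> bool" where
  "frac_ideal D E \<longleftrightarrow> E \<in> Fbar D \<and> (\<exists>d\<in>D. d \<noteq> 0 \<and> smul d E \<subseteq> D)"

definition cic :: "'a::field set \<Rightarrow> 'a set" where
  "cic D = \<Union>{kcolon E E | E. frac_ideal D E}"

end

theory Submission
  imports Defs
begin

text \<open>
  Let X be a finitely generated T-submodule of K and F the D-module spanned by generators
  of X. The P*MD property of D puts into F(D:F), hence into the trace X(T:X), a finitely
  generated ideal G of D with G^* = D^*. For (a), the T-module spanned by G is finitely
  generated, lies in X(T:X), and its star contains T. For (b), t-linkedness gives
  t_T(GT) = T with GT inside X(T:X).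

  The rings D^[*] and, if (D:D^*) is nonzero, the complete integral closure are directed
  unions of transporters (H^*:H^*), resp. of rings (E:E) contained in (E^*:E^*) with E^*
  again a fractional ideal. Since y E^* \<subseteq> E^* follows from y G E^* \<subseteq> E^*
  as soon as 1 \<in> G^*, these unions are t-linked to (D, *).
\<close>

section \<open>Finitely generated submodules\<close>

lemma sum_closed:
  assumes "0 \<in> M" "\<And>x y. x \<in> M \<Longrightarrow> y \<in> M \<Longrightarrow> x + y \<in> M" "\<And>a. a \<in> A \<Longrightarrow> f a \<in> M"
  shows "sum f A \<in> M"
  using assms(3)
  by (induction A rule: infinite_finite_induct) (auto intro: assms(1,2))

lemma subringD:
  assumes "subring R"
  shows "0 \<in> R" "1 \<in> R" "x \<in> R \<Longrightarrow> y \<in> R \<Longrightarrow> x + y \<in> R"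
    "x \<in> R \<Longrightarrow> - x \<in> R" "x \<in> R \<Longrightarrow> y \<in> R \<Longrightarrow> x * y \<in> R"
  using assms unfolding subring_def by auto

lemma submodD:
  assumes "submod R M"
  shows "0 \<in> M" "x \<in> M \<Longrightarrow> y \<in> M \<Longrightarrow> x + y \<in> M" "r \<in> R \<Longrightarrow> x \<in> M \<Longrightarrow> r * x \<in> M"
  using assms unfolding submod_def by auto

lemma submod_antimono: "submod T M \<Longrightarrow> D \<subseteq> T \<Longrightarrow> submod D M"
  unfolding submod_def by blast

lemma submod_subring: "subring T \<Longrightarrow> D \<subseteq> T \<Longrightarrow> submod D T"
  unfolding submod_def subring_def by blast

lemma submod_mult_preimage: "submod R M \<Longrightarrow> submod R {z. x * z \<in> M}"
  unfolding submod_def by (auto simp: distrib_left mult.left_commute)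

lemma Fbar_iff: "E \<in> Fbar R \<longleftrightarrow> submod R E \<and> E \<noteq> {0}"
  unfolding Fbar_def by blast

lemma FbarI: "submod R E \<Longrightarrow> e \<in> E \<Longrightarrow> e \<noteq> 0 \<Longrightarrow> E \<in> Fbar R"
  unfolding Fbar_iff by blast

lemma Fbar_nonzero: "E \<in> Fbar R \<Longrightarrow> \<exists>e\<in>E. e \<noteq> 0"
  unfolding Fbar_iff submod_def by blast

lemma overring_Fbar: "overring D T \<Longrightarrow> T \<in> Fbar D"
  unfolding overring_def by (auto intro: FbarI[of _ _ 1] submod_subring subringD)

lemma overring_refl: "subring D \<Longrightarrow> overring D D"
  unfolding overring_def by blast

lemma subring_Fbar: "subring D \<Longrightarrow> D \<in> Fbar D"
  by (rule overring_Fbar[OF overring_refl])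

lemma gen_memI: "(\<And>s. s \<in> S \<Longrightarrow> c s \<in> R) \<Longrightarrow> (\<Sum>s\<in>S. c s * s) \<in> gen R S"
  unfolding gen_def by blast

lemma gen_memE:
  assumes "x \<in> gen R S" obtains c where "x = (\<Sum>s\<in>S. c s * s)" "\<And>s. s \<in> S \<Longrightarrow> c s \<in> R"
  using assms unfolding gen_def by blast

lemma gen_submod:
  assumes "subring R" shows "submod R (gen R S)"
  unfolding submod_def
proof (intro conjI ballI)
  have "(\<Sum>s\<in>S. 0 * s) \<in> gen R S"
    by (rule gen_memI) (simp add: subringD[OF assms])
  then show "0 \<in> gen R S" by simp
next
  fix x y assume x: "x \<in> gen R S" and y: "y \<in> gen R S"
  obtain c where c: "x = (\<Sum>s\<in>S. c s * s)" "\<And>s. s \<in> S \<Longrightarrow> c s \<in> R"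
    using x by (blast elim: gen_memE)
  obtain d where d: "y = (\<Sum>s\<in>S. d s * s)" "\<And>s. s \<in> S \<Longrightarrow> d s \<in> R"
    using y by (blast elim: gen_memE)
  have "(\<Sum>s\<in>S. (c s + d s) * s) \<in> gen R S"
    by (rule gen_memI) (simp add: c(2) d(2) subringD(3)[OF assms])
  then show "x + y \<in> gen R S"
    by (simp add: c(1) d(1) distrib_right sum.distrib)
next
  fix r x assume r: "r \<in> R" and x: "x \<in> gen R S"
  obtain c where c: "x = (\<Sum>s\<in>S. c s * s)" "\<And>s. s \<in> S \<Longrightarrow> c s \<in> R"
    using x by (blast elim: gen_memE)
  have "(\<Sum>s\<in>S. (r * c s) * s) \<in> gen R S"
    by (rule gen_memI) (simp add: c(2) r subringD(5)[OF assms])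
  then show "r * x \<in> gen R S"
    by (simp add: c(1) sum_distrib_left mult.assoc)
qed

lemma gen_superset:
  assumes "subring R" "finite S" shows "S \<subseteq> gen R S"
proof
  fix s assume "s \<in> S"
  have "(\<Sum>t\<in>S. (if t = s then 1 else 0) * t) \<in> gen R S"
    by (rule gen_memI) (simp add: subringD[OF assms(1)])
  also have "(\<Sum>t\<in>S. (if t = s then 1 else 0) * t) = (\<Sum>t\<in>S. if t = s then s else 0)"
    by (rule sum.cong) auto
  finally show "s \<in> gen R S"
    using \<open>s \<in> S\<close> assms(2) by simp
qed

lemma gen_least:
  assumes "submod R M" "S \<subseteq> M" shows "gen R S \<subseteq> M"
proof
  fix x assume "x \<in> gen R S"
  then obtain c where c: "x = (\<Sum>s\<in>S. c s * s)" "\<And>s. s \<in> S \<Longrightarrow> c s \<in> R"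
    by (blast elim: gen_memE)
  show "x \<in> M"
    unfolding c(1) using assms c(2) by (intro sum_closed) (auto dest: submodD)
qed

lemma gen_mono_ring: "D \<subseteq> T \<Longrightarrow> gen D S \<subseteq> gen T S"
  unfolding gen_def by blast

lemma gen_nonzero:
  assumes "x \<in> gen R S" "x \<noteq> 0" shows "\<exists>s\<in>S. s \<noteq> 0"
proof (rule ccontr)
  obtain c where c: "x = (\<Sum>s\<in>S. c s * s)"
    using assms(1) by (blast elim: gen_memE)
  assume "\<not> (\<exists>s\<in>S. s \<noteq> 0)"
  then have "x = 0" unfolding c by (intro sum.neutral) simp
  with assms(2) show False ..
qed

lemma gen_one: "subring R \<Longrightarrow> gen R {1} = R"
  unfolding gen_def by auto

lemma fgmodE:
  assumes "X \<in> fgmod R" obtains S where "finite S" "X = gen R S" "X \<noteq> {0}"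
  using assms unfolding fgmod_def by blast

lemma gen_fgmod: "finite S \<Longrightarrow> subring R \<Longrightarrow> s \<in> S \<Longrightarrow> s \<noteq> 0 \<Longrightarrow> gen R S \<in> fgmod R"
  unfolding fgmod_def using gen_superset[of R S] by blast

lemma fgmod_ring: "subring R \<Longrightarrow> R \<in> fgmod R"
  using gen_fgmod[of "{1}" R 1] by (simp add: gen_one)

lemma fgmod_submod: "subring T \<Longrightarrow> X \<in> fgmod T \<Longrightarrow> submod T X"
  by (metis fgmodE gen_submod)

lemma fgmod_Fbar: "overring D T \<Longrightarrow> X \<in> fgmod T \<Longrightarrow> X \<in> Fbar D"
  unfolding overring_def Fbar_iff fgmod_def by (blast intro: submod_antimono gen_submod)

lemma gen_fgmod_extend:
  assumes "subring D" "D \<subseteq> T" "finite S" "gen D S \<in> fgmod D"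
  shows "gen T S \<in> fgmod T"
proof -
  have "gen D S \<noteq> {0}" using assms(4) unfolding fgmod_def by blast
  then obtain x where "x \<in> gen D S" "x \<noteq> 0"
    using submodD(1)[OF gen_submod[OF assms(1)]] by blast
  then have "x \<in> gen T S" "x \<noteq> 0"
    using gen_mono_ring[OF assms(2)] by blast+
  with assms(3) show ?thesis
    unfolding fgmod_def by blast
qed

section \<open>Products and transporters\<close>

lemma modprod_mem:
  "x \<in> modprod A B \<longleftrightarrow> (\<exists>(n::nat) f g. x = (\<Sum>i<n. f i * g i) \<and> (\<forall>i<n. f i \<in> A \<and> g i \<in> B))"
  unfolding modprod_def by auto

lemma modprod_mono: "A \<subseteq> A' \<Longrightarrow> B \<subseteq> B' \<Longrightarrow> modprod A B \<subseteq> modprod A' B'"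
  unfolding modprod_def by blast

lemma mult_in_modprod: "a \<in> A \<Longrightarrow> b \<in> B \<Longrightarrow> a * b \<in> modprod A B"
  unfolding modprod_mem by (rule exI[of _ 1]) auto

lemma modprod_subset:
  assumes "submod R M" "\<And>a b. a \<in> A \<Longrightarrow> b \<in> B \<Longrightarrow> a * b \<in> M"
  shows "modprod A B \<subseteq> M"
  unfolding modprod_def using assms by (auto intro!: sum_closed[of M] dest: submodD)

lemma modprod_mult:
  assumes "\<And>a. a \<in> A \<Longrightarrow> x * a \<in> A'" "p \<in> modprod A B"
  shows "x * p \<in> modprod A' B"
proof -
  obtain n :: nat and f g where p: "p = (\<Sum>i<n. f i * g i)" "\<forall>i<n. f i \<in> A \<and> g i \<in> B"
    using assms(2) unfolding modprod_mem by blast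
  have "x * p = (\<Sum>i<n. (x * f i) * g i)"
    by (simp add: p sum_distrib_left mult.assoc)
  moreover have "\<forall>i<n. x * f i \<in> A' \<and> g i \<in> B"
    using p(2) assms(1) by blast
  ultimately show ?thesis
    unfolding modprod_mem by (intro exI[of _ n] exI[of _ "\<lambda>i. x * f i"] exI[of _ g]) simp
qed

lemma modprod_commute: "modprod A B = modprod B A"
proof -
  have "modprod A B \<subseteq> modprod B A" for A B :: "'a::field set"
  proof
    fix x assume "x \<in> modprod A B"
    then obtain n :: nat and f g where "x = (\<Sum>i<n. f i * g i)" "\<forall>i<n. f i \<in> A \<and> g i \<in> B"
      unfolding modprod_mem by blast
    then have "x = (\<Sum>i<n. g i * f i)" "\<forall>i<n. g i \<in> B \<and> f i \<in> A"
      by (simp_all add: mult.commute)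
    then show "x \<in> modprod B A"
      unfolding modprod_mem by blast
  qed
  then show ?thesis by blast
qed

lemma modprod_add:
  assumes "p \<in> modprod A B" "q \<in> modprod A B" shows "p + q \<in> modprod A B"
proof -
  obtain n :: nat and f g where p: "p = (\<Sum>i<n. f i * g i)" "\<forall>i<n. f i \<in> A \<and> g i \<in> B"
    using assms(1) unfolding modprod_mem by blast
  obtain m :: nat and f' g' where q: "q = (\<Sum>i<m. f' i * g' i)" "\<forall>i<m. f' i \<in> A \<and> g' i \<in> B"
    using assms(2) unfolding modprod_mem by blast
  define F where "F i = (if i < n then f i else f' (i - n))" for i
  define G where "G i = (if i < n then g i else g' (i - n))" for i
  have "(\<Sum>i<n + k. F i * G i) = p + (\<Sum>i<k. f' i * g' i)" for k
    by (induction k) (simp_all add: F_def G_def p(1))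
  then have "p + q = (\<Sum>i<n + m. F i * G i)"
    using q(1) by simp
  moreover have "\<forall>i<n + m. F i \<in> A \<and> G i \<in> B"
    using p(2) q(2) by (auto simp: F_def G_def)
  ultimately show ?thesis
    unfolding modprod_mem by blast
qed

lemma modprod_submod:
  assumes "submod R A" shows "submod R (modprod A B)"
proof -
  have "0 \<in> modprod A B"
    unfolding modprod_mem by (rule exI[of _ 0]) simp
  moreover have "r * p \<in> modprod A B" if "r \<in> R" "p \<in> modprod A B" for r p
    using that by (intro modprod_mult[of A]) (auto dest: submodD(3)[OF assms])
  ultimately show ?thesis
    unfolding submod_def using modprod_add by blast
qed

lemma modprod_gen:
  assumes "subring R" "finite S1" "finite S2"
  shows "modprod (gen R S1) (gen R S2) = gen R {a * b | a b. a \<in> S1 \<and> b \<in> S2}"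
    (is "_ = ?P")
proof
  have P: "submod R ?P" by (rule gen_submod[OF assms(1)])
  have "finite {a * b | a b. a \<in> S1 \<and> b \<in> S2}"
    using assms(2,3) by (intro finite_image_set2) simp_all
  then have products: "{a * b | a b. a \<in> S1 \<and> b \<in> S2} \<subseteq> ?P"
    by (rule gen_superset[OF assms(1)])
  have "x * b \<in> ?P" if "x \<in> gen R S1" "b \<in> S2" for x b
  proof -
    have "S1 \<subseteq> {z. b * z \<in> ?P}"
      using products that(2) by (auto simp: mult.commute)
    then have "gen R S1 \<subseteq> {z. b * z \<in> ?P}"
      by (intro gen_least submod_mult_preimage P)
    with that(1) have "b * x \<in> ?P" by blast
    then show ?thesis by (simp only: mult.commute[of x b])
  qed
  then have "gen R S2 \<subseteq> {z. x * z \<in> ?P}" if "x \<in> gen R S1" for x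
    using that by (intro gen_least submod_mult_preimage P) auto
  then show "modprod (gen R S1) (gen R S2) \<subseteq> ?P"
    by (intro modprod_subset[OF P]) auto
  show "?P \<subseteq> modprod (gen R S1) (gen R S2)"
    using gen_superset[OF assms(1)] assms(2,3)
    by (intro gen_least modprod_submod gen_submod assms(1)) (blast intro: mult_in_modprod)
qed

lemma fgmod_modprod:
  assumes "subring R" "X \<in> fgmod R" "Y \<in> fgmod R" shows "modprod X Y \<in> fgmod R"
proof -
  obtain S1 where S1: "finite S1" "X = gen R S1" "X \<noteq> {0}" using assms(2) by (rule fgmodE)
  obtain S2 where S2: "finite S2" "Y = gen R S2" "Y \<noteq> {0}" using assms(3) by (rule fgmodE)
  obtain a b where "a \<in> S1" "a \<noteq> 0" "b \<in> S2" "b \<noteq> 0"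
    using S1 S2 gen_submod[OF assms(1)] gen_nonzero by (metis Fbar_iff Fbar_nonzero)
  moreover have "finite {a * b | a b. a \<in> S1 \<and> b \<in> S2}"
    using S1(1) S2(1) by (intro finite_image_set2) simp_all
  ultimately show ?thesis
    unfolding S1(2) S2(2) modprod_gen[OF assms(1) S1(1) S2(1)]
    by (intro gen_fgmod[of _ _ "a * b"] assms(1)) auto
qed

lemma modprod_Fbar:
  assumes "E1 \<in> Fbar R" "E2 \<in> Fbar R" shows "modprod E1 E2 \<in> Fbar R"
proof -
  obtain a b where "a \<in> E1" "a \<noteq> 0" "b \<in> E2" "b \<noteq> 0"
    using Fbar_nonzero[OF assms(1)] Fbar_nonzero[OF assms(2)] by blast
  moreover have "submod R (modprod E1 E2)"
    using assms(1) unfolding Fbar_iff by (blast intro: modprod_submod)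
  ultimately show ?thesis
    by (intro FbarI[of _ _ "a * b"]) (auto intro: mult_in_modprod)
qed

lemma modprod_kcolon_subset:
  assumes "subring R" shows "modprod X (kcolon R X) \<subseteq> R"
proof (rule modprod_subset[OF submod_subring[OF assms order.refl]])
  fix a b assume "a \<in> X" "b \<in> kcolon R X"
  then have "b * a \<in> R" unfolding kcolon_def by blast
  then show "a * b \<in> R" by (simp add: mult.commute)
qed

lemma kcolon_antimono: "A \<subseteq> B \<Longrightarrow> kcolon M B \<subseteq> kcolon M A"
  unfolding kcolon_def by blast

lemma kcolon_mono: "M \<subseteq> N \<Longrightarrow> kcolon M A \<subseteq> kcolon N A"
  unfolding kcolon_def by blast

lemma kcolon_ring_self: assumes "subring T" shows "kcolon T T = T"
proof
  show "kcolon T T \<subseteq> T"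
    unfolding kcolon_def using subringD(2)[OF assms] by force
  show "T \<subseteq> kcolon T T"
    unfolding kcolon_def using subringD(5)[OF assms] by blast
qed

lemma overring_kcolon_self:
  assumes "subring D" "submod D E" shows "overring D (kcolon E E)"
proof -
  have "- x \<in> E" if "x \<in> E" for x
    using submodD(3)[OF assms(2) subringD(4)[OF assms(1) subringD(2)[OF assms(1)]] that] by simp
  then show ?thesis
    unfolding overring_def subring_def kcolon_def
    using submodD[OF assms(2)] by (auto simp: distrib_right mult.assoc)
qed

lemma kcolon_modprod_self: "x \<in> kcolon A A \<Longrightarrow> x \<in> kcolon (modprod A B) (modprod A B)"
  unfolding kcolon_def using modprod_mult[of A x A] by blast

lemma kcolon_gen:
  assumes "subring R" "submod R M" "finite S"
  shows "kcolon M (gen R S) = {y. \<forall>s\<in>S. y * s \<in> M}"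
proof
  show "kcolon M (gen R S) \<subseteq> {y. \<forall>s\<in>S. y * s \<in> M}"
    using gen_superset[OF assms(1,3)] unfolding kcolon_def by blast
  show "{y. \<forall>s\<in>S. y * s \<in> M} \<subseteq> kcolon M (gen R S)"
    using gen_least[OF submod_mult_preimage[OF assms(2)]] unfolding kcolon_def by blast
qed

lemma v_op_ring: "subring T \<Longrightarrow> v_op T T = T"
  unfolding v_op_def by (simp add: kcolon_ring_self)

lemma t_op_mono: "E \<subseteq> E' \<Longrightarrow> t_op T E \<subseteq> t_op T E'"
  unfolding t_op_def star_f_def by blast

lemma t_op_subset:
  assumes "subring T" "E \<subseteq> T" shows "t_op T E \<subseteq> T"
proof -
  have "v_op T G \<subseteq> T" if "G \<subseteq> T" for G
    using kcolon_antimono[OF kcolon_antimono[OF that]] v_op_ring[OF assms(1)]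
    unfolding v_op_def by blast
  then show ?thesis
    unfolding t_op_def star_f_def using assms(2) by blast
qed

lemma t_op_eq_ring:
  assumes "subring T" "E \<subseteq> T" "H \<in> fgmod T" "H \<subseteq> E" "kcolon T H \<subseteq> T"
  shows "t_op T E = T"
proof
  show "t_op T E \<subseteq> T" by (rule t_op_subset[OF assms(1,2)])
  have "T \<subseteq> v_op T H"
    unfolding v_op_def kcolon_def using assms(5) subringD(5)[OF assms(1)]
    unfolding kcolon_def by blast
  then show "T \<subseteq> t_op T E"
    unfolding t_op_def star_f_def using assms(3,4) by blast
qed

lemma t_op_ring: "subring T \<Longrightarrow> t_op T T = T"
  by (rule t_op_eq_ring[of _ _ T]) (auto simp: fgmod_ring kcolon_ring_self)

section \<open>Directed unions and t-linked overrings\<close>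

definition upward_directed :: "'b set set \<Rightarrow> bool" where
  "upward_directed FF \<longleftrightarrow> (\<forall>A\<in>FF. \<forall>B\<in>FF. \<exists>C\<in>FF. A \<union> B \<subseteq> C)"

lemma upward_directed_finite_subset:
  assumes "FF \<noteq> {}" "upward_directed FF" "finite S" "S \<subseteq> \<Union>FF"
  shows "\<exists>C\<in>FF. S \<subseteq> C"
  using assms(3,4)
proof (induction S rule: finite_induct)
  case empty
  then show ?case using assms(1) by blast
next
  case (insert x S)
  then obtain C where "C \<in> FF" "S \<subseteq> C" by blast
  moreover obtain A where "A \<in> FF" "x \<in> A" using insert.prems by blast
  ultimately obtain C' where "C' \<in> FF" "A \<union> C \<subseteq> C'"
    using assms(2) unfolding upward_directed_def by blast
  with \<open>x \<in> A\<close> \<open>S \<subseteq> C\<close> show ?case by blast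
qed

lemma overring_Union_directed:
  assumes "FF \<noteq> {}" "upward_directed FF" "\<And>C. C \<in> FF \<Longrightarrow> overring D C"
  shows "overring D (\<Union>FF)"
proof -
  have closed: "x + y \<in> \<Union>FF \<and> - x \<in> \<Union>FF \<and> x * y \<in> \<Union>FF"
    if xy: "x \<in> \<Union>FF" "y \<in> \<Union>FF" for x y
  proof -
    obtain A B where "A \<in> FF" "B \<in> FF" "x \<in> A" "y \<in> B" using xy by blast
    moreover from calculation(1,2) obtain C where "C \<in> FF" "A \<union> B \<subseteq> C"
      using assms(2) unfolding upward_directed_def by blast
    ultimately have "subring C" "x \<in> C" "y \<in> C" "C \<in> FF"
      using assms(3) unfolding overring_def by blast+
    then show ?thesis using subringD(3-5) by blast
  qed
  obtain C where C: "C \<in> FF" using assms(1) by blast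
  then have "0 \<in> \<Union>FF" "1 \<in> \<Union>FF"
    using subringD(1,2) assms(3)[OF C] unfolding overring_def by blast+
  moreover have "D \<subseteq> \<Union>FF"
    using assms(3)[OF C] C unfolding overring_def by blast
  ultimately show ?thesis
    unfolding overring_def subring_def using closed by blast
qed

lemma kcolon_Union_directed_gen:
  assumes "subring D" "FF \<noteq> {}" "upward_directed FF" "\<And>C. C \<in> FF \<Longrightarrow> overring D C"
    and "finite S" "y \<in> kcolon (\<Union>FF) (gen D S)"
  obtains C where "C \<in> FF" "y \<in> kcolon C (gen D S)"
proof -
  have "(\<lambda>s. y * s) ` S \<subseteq> \<Union>FF"
    using assms(6) gen_superset[OF assms(1,5)] unfolding kcolon_def by blast
  then obtain C where C: "C \<in> FF" "(\<lambda>s. y * s) ` S \<subseteq> C"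
    using upward_directed_finite_subset[OF assms(2,3)] assms(5) by blast
  moreover have "submod D C"
    using assms(4)[OF C(1)] unfolding overring_def by (blast intro: submod_subring)
  ultimately show ?thesis
    using that kcolon_gen[OF assms(1) _ assms(5)] by blast
qed

lemma t_linkedI:
  assumes "subring D" "overring D T"
    and "\<And>G. G \<in> fgmod D \<Longrightarrow> G \<subseteq> D \<Longrightarrow> st G = st D \<Longrightarrow> kcolon T G \<subseteq> T"
  shows "t_linked D st T"
  unfolding t_linked_def
proof (intro allI impI)
  fix G assume G: "G \<in> fgmod D \<and> G \<subseteq> D \<and> st G = st D"
  obtain S where S: "finite S" "G = gen D S" using G by (blast elim: fgmodE)
  have T: "subring T" "D \<subseteq> T" using assms(2) unfolding overring_def by auto
  let ?H = "gen T S"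
  have "S \<subseteq> modprod G T"
  proof
    fix s assume "s \<in> S"
    then have "s \<in> G" using gen_superset[OF assms(1) S(1)] S(2) by blast
    then have "s * 1 \<in> modprod G T" using subringD(2)[OF T(1)] by (rule mult_in_modprod)
    then show "s \<in> modprod G T" by simp
  qed
  moreover have "submod T (modprod G T)"
    using modprod_submod[OF submod_subring[OF T(1) order.refl], of G] by (simp add: modprod_commute)
  ultimately have "?H \<subseteq> modprod G T" by (intro gen_least)
  moreover have "modprod G T \<subseteq> T"
    by (rule modprod_subset[OF submod_subring[OF T(1) order.refl]])
      (use G T subringD(5)[OF T(1)] in blast)
  moreover have "?H \<in> fgmod T"
    by (rule gen_fgmod_extend[OF assms(1) T(2) S(1)]) (use G S(2) in simp)
  moreover have "kcolon T ?H \<subseteq> T"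
  proof -
    have "G \<subseteq> ?H" using gen_mono_ring[OF T(2)] S(2) by simp
    then have "kcolon T ?H \<subseteq> kcolon T G" by (rule kcolon_antimono)
    also have "\<dots> \<subseteq> T" using assms(3) G by blast
    finally show ?thesis .
  qed
  ultimately show "t_op T (modprod G T) = t_op T T"
    by (simp add: t_op_eq_ring[OF T(1)] t_op_ring[OF T(1)])
qed

lemma t_linked_Union_directed:
  assumes "subring D" "FF \<noteq> {}" "upward_directed FF" "\<And>C. C \<in> FF \<Longrightarrow> overring D C"
    and "\<And>C G. C \<in> FF \<Longrightarrow> G \<in> fgmod D \<Longrightarrow> G \<subseteq> D \<Longrightarrow> st G = st D
      \<Longrightarrow> \<exists>C'\<in>FF. kcolon C G \<subseteq> C'"
  shows "t_linked D st (\<Union>FF)"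
proof (rule t_linkedI[OF assms(1) overring_Union_directed[OF assms(2-4)]])
  fix G assume G: "G \<in> fgmod D" "G \<subseteq> D" "st G = st D"
  obtain S where S: "finite S" "G = gen D S" using G(1) by (rule fgmodE)
  show "kcolon (\<Union>FF) G \<subseteq> \<Union>FF"
  proof
    fix y assume "y \<in> kcolon (\<Union>FF) G"
    then obtain C where "C \<in> FF" "y \<in> kcolon C G"
      using kcolon_Union_directed_gen[OF assms(1-4) S(1)] S(2) by blast
    with assms(5) G show "y \<in> \<Union>FF" by blast
  qed
qed

lemma frac_ideal_modprod:
  assumes "subring D" "frac_ideal D E1" "frac_ideal D E2"
  shows "frac_ideal D (modprod E1 E2)"
proof -
  obtain d1 where d1: "d1 \<in> D" "d1 \<noteq> 0" "smul d1 E1 \<subseteq> D"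
    using assms(2) unfolding frac_ideal_def by blast
  obtain d2 where d2: "d2 \<in> D" "d2 \<noteq> 0" "smul d2 E2 \<subseteq> D"
    using assms(3) unfolding frac_ideal_def by blast
  have "(d1 * d2) * (a * b) \<in> D" if "a \<in> E1" "b \<in> E2" for a b
  proof -
    have "d1 * a \<in> D" "d2 * b \<in> D" using d1(3) d2(3) that unfolding smul_def by blast+
    then have "(d1 * a) * (d2 * b) \<in> D" by (rule subringD(5)[OF assms(1)])
    then show ?thesis by (simp add: mult_ac)
  qed
  then have "modprod E1 E2 \<subseteq> {z. (d1 * d2) * z \<in> D}"
    by (intro modprod_subset submod_mult_preimage submod_subring[OF assms(1)]) auto
  moreover have "modprod E1 E2 \<in> Fbar D"
    using assms(2,3) unfolding frac_ideal_def by (blast intro: modprod_Fbar)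
  moreover have "d1 * d2 \<in> D" "d1 * d2 \<noteq> 0"
    using subringD(5)[OF assms(1) d1(1) d2(1)] d1(2) d2(2) by auto
  ultimately show ?thesis
    unfolding frac_ideal_def smul_def by blast
qed

lemma cic_family:
  assumes "subring D"
  shows "{kcolon E E | E. frac_ideal D E} \<noteq> {}"
    and "upward_directed {kcolon E E | E. frac_ideal D E}"
    and "C \<in> {kcolon E E | E. frac_ideal D E} \<Longrightarrow> overring D C"
proof -
  let ?FF = "{kcolon E E | E. frac_ideal D E}"
  have "frac_ideal D D"
    unfolding frac_ideal_def smul_def
    by (intro conjI bexI[of _ 1]) (simp_all add: subring_Fbar[OF assms] subringD(2)[OF assms])
  then show "?FF \<noteq> {}" by blast
  show "upward_directed ?FF"
    unfolding upward_directed_def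
  proof (intro ballI)
    fix A B assume "A \<in> ?FF" "B \<in> ?FF"
    then obtain E1 E2 where E: "A = kcolon E1 E1" "B = kcolon E2 E2" "frac_ideal D E1" "frac_ideal D E2"
      by blast
    let ?E = "modprod E1 E2"
    have "kcolon ?E ?E \<in> ?FF" using frac_ideal_modprod[OF assms E(3,4)] by blast
    moreover have "A \<subseteq> kcolon ?E ?E" "B \<subseteq> kcolon ?E ?E"
      using kcolon_modprod_self[of _ E1 E2] kcolon_modprod_self[of _ E2 E1]
      unfolding E(1,2) modprod_commute[of E2 E1] by blast+
    ultimately show "\<exists>C\<in>?FF. A \<union> B \<subseteq> C" by blast
  qed
  show "overring D C" if "C \<in> ?FF"
    using that assms unfolding frac_ideal_def Fbar_iff by (blast intro: overring_kcolon_self)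
qed

lemma overring_cic: "subring D \<Longrightarrow> overring D (cic D)"
  unfolding cic_def by (rule overring_Union_directed[OF cic_family])

section \<open>Semistar operations\<close>

lemma smul_eq_preimage:
  assumes "x \<noteq> 0" shows "smul x E = {z. inverse x * z \<in> E}"
proof (intro set_eqI iffI)
  fix z assume "z \<in> smul x E"
  then obtain e where "e \<in> E" "z = x * e" unfolding smul_def by blast
  then show "z \<in> {z. inverse x * z \<in> E}" using assms by (simp add: mult.assoc[symmetric])
next
  fix z assume "z \<in> {z. inverse x * z \<in> E}"
  moreover have "z = x * (inverse x * z)" using assms by simp
  ultimately show "z \<in> smul x E" unfolding smul_def by blast
qed

lemma smul_Fbar:
  assumes "E \<in> Fbar R" "x \<noteq> 0" shows "smul x E \<in> Fbar R"
proof -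
  obtain e where "e \<in> E" "e \<noteq> 0" using Fbar_nonzero[OF assms(1)] by blast
  moreover have "submod R (smul x E)"
    using assms unfolding Fbar_iff smul_eq_preimage[OF assms(2)] by (blast intro: submod_mult_preimage)
  ultimately show ?thesis
    using assms(2) by (intro FbarI[of _ _ "x * e"]) (auto simp: smul_def)
qed

locale semistar_domain =
  fixes D :: "'a::field set" and star :: "'a set \<Rightarrow> 'a set"
  assumes subring_D: "subring D" and semistar: "semistar D star"
begin

lemma
  shows star_Fbar: "E \<in> Fbar D \<Longrightarrow> star E \<in> Fbar D"
    and star_smul: "x \<noteq> 0 \<Longrightarrow> E \<in> Fbar D \<Longrightarrow> star (smul x E) = smul x (star E)"
    and star_mono: "E \<in> Fbar D \<Longrightarrow> G \<in> Fbar D \<Longrightarrow> E \<subseteq> G \<Longrightarrow> star E \<subseteq> star G"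
    and star_extensive: "E \<in> Fbar D \<Longrightarrow> E \<subseteq> star E"
    and star_idem: "E \<in> Fbar D \<Longrightarrow> star (star E) = star E"
  using semistar unfolding semistar_def by simp_all

lemma Fbar_if_fgmod: "G \<in> fgmod D \<Longrightarrow> G \<in> Fbar D"
  by (rule fgmod_Fbar[OF overring_refl[OF subring_D]])

lemma star_submod: "E \<in> Fbar D \<Longrightarrow> submod D (star E)"
  using star_Fbar Fbar_iff by blast

lemma one_in_star_D: "1 \<in> star D"
  using star_extensive[OF subring_Fbar[OF subring_D]] subringD(2)[OF subring_D] by blast

lemma star_subset_star:
  assumes "E \<in> Fbar D" "G \<in> Fbar D" "E \<subseteq> star G" shows "star E \<subseteq> star G"
  using star_mono[OF assms(1) star_Fbar[OF assms(2)] assms(3)] star_idem[OF assms(2)] by simp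

lemma smul_star_subset:
  assumes "E \<in> Fbar D" "G \<in> Fbar D" "smul x E \<subseteq> star G"
  shows "smul x (star E) \<subseteq> star G"
proof (cases "x = 0")
  case True
  then show ?thesis
    using submodD(1)[OF star_submod[OF assms(2)]] unfolding smul_def by auto
next
  case False
  have "smul x (star E) = star (smul x E)"
    by (rule star_smul[OF False assms(1), symmetric])
  also have "\<dots> \<subseteq> star G"
    by (rule star_subset_star[OF smul_Fbar[OF assms(1) False] assms(2,3)])
  finally show ?thesis .
qed

lemma subset_star_if_one_in_star:
  assumes "submod T E" "E \<in> Fbar D" "1 \<in> star E" shows "T \<subseteq> star E"
proof
  fix t assume "t \<in> T"
  then have "smul t E \<subseteq> star E"
    using submodD(3)[OF assms(1)] star_extensive[OF assms(2)] unfolding smul_def by blast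
  then have "smul t (star E) \<subseteq> star E"
    by (rule smul_star_subset[OF assms(2,2)])
  then show "t \<in> star E"
    using assms(3) unfolding smul_def by force
qed

lemma star_eq_star_D:
  assumes "G \<in> Fbar D" "G \<subseteq> D" "1 \<in> star G" shows "star G = star D"
proof
  show "star G \<subseteq> star D"
    by (rule star_mono[OF assms(1) subring_Fbar[OF subring_D] assms(2)])
  have "D \<subseteq> star G"
    using subset_star_if_one_in_star[of D G] assms(1,3) unfolding Fbar_iff by blast
  then show "star D \<subseteq> star G"
    by (rule star_subset_star[OF subring_Fbar[OF subring_D] assms(1)])
qed

lemma kcolon_subset_kcolon_star:
  assumes "E \<in> Fbar D" shows "kcolon E E \<subseteq> kcolon (star E) (star E)"
proof
  fix x assume "x \<in> kcolon E E"
  then have "smul x E \<subseteq> star E"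
    using star_extensive[OF assms] unfolding kcolon_def smul_def by blast
  then have "smul x (star E) \<subseteq> star E"
    by (rule smul_star_subset[OF assms assms])
  then show "x \<in> kcolon (star E) (star E)"
    unfolding kcolon_def smul_def by blast
qed

lemma kcolon_kcolon_star_subset:
  assumes "G \<in> Fbar D" "1 \<in> star G" "E \<in> Fbar D"
  shows "kcolon (kcolon (star E) (star E)) G \<subseteq> kcolon (star E) (star E)"
proof
  fix y assume y: "y \<in> kcolon (kcolon (star E) (star E)) G"
  have "y * z \<in> star E" if z: "z \<in> star E" for z
  proof -
    have "smul (y * z) G \<subseteq> star E"
      unfolding smul_def
    proof (rule image_subsetI)
      fix g assume "g \<in> G"
      then have "(y * g) * z \<in> star E" using y z unfolding kcolon_def by blast
      then show "(y * z) * g \<in> star E" by (simp add: mult_ac)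
    qed
    then have "smul (y * z) (star G) \<subseteq> star E"
      by (rule smul_star_subset[OF assms(1,3)])
    then show ?thesis
      using assms(2) unfolding smul_def by force
  qed
  then show "y \<in> kcolon (star E) (star E)"
    unfolding kcolon_def by blast
qed

lemma kcolon_star_subset_modprod:
  assumes "E1 \<in> Fbar D" "E2 \<in> Fbar D"
  shows "kcolon (star E1) (star E1) \<subseteq> kcolon (star (modprod E1 E2)) (star (modprod E1 E2))"
proof
  let ?E = "modprod E1 E2"
  have E: "?E \<in> Fbar D" by (rule modprod_Fbar[OF assms])
  fix x assume x: "x \<in> kcolon (star E1) (star E1)"
  have E2_mult: "b * w \<in> star ?E" if "b \<in> E2" "w \<in> star E1" for b w
  proof -
    have "smul b E1 \<subseteq> star ?E"
      using that(1) star_extensive[OF E] mult_in_modprod[of _ E1 b E2]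
      unfolding smul_def by (auto simp: mult.commute)
    then have "smul b (star E1) \<subseteq> star ?E"
      by (rule smul_star_subset[OF assms(1) E])
    with that(2) show ?thesis
      unfolding smul_def by blast
  qed
  have "?E \<subseteq> {z. x * z \<in> star ?E}"
  proof (intro modprod_subset[OF submod_mult_preimage[OF star_submod[OF E]]] CollectI)
    fix a b assume "a \<in> E1" "b \<in> E2"
    then have "x * a \<in> star E1"
      using x star_extensive[OF assms(1)] unfolding kcolon_def by blast
    with \<open>b \<in> E2\<close> have "b * (x * a) \<in> star ?E" by (rule E2_mult)
    then show "x * (a * b) \<in> star ?E" by (simp add: mult_ac)
  qed
  then have "smul x (star ?E) \<subseteq> star ?E"
    by (intro smul_star_subset[OF E E]) (auto simp: smul_def)
  then show "x \<in> kcolon (star ?E) (star ?E)"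
    unfolding kcolon_def smul_def by blast
qed

lemma frac_ideal_star:
  assumes "kcolon D (star D) \<noteq> {0}" "frac_ideal D E" shows "frac_ideal D (star E)"
proof -
  have "0 \<in> kcolon D (star D)"
    using subringD(1)[OF subring_D] unfolding kcolon_def by simp
  then obtain c where c: "c \<in> kcolon D (star D)" "c \<noteq> 0"
    using assms(1) by blast
  obtain d where d: "d \<in> D" "d \<noteq> 0" "smul d E \<subseteq> D"
    using assms(2) unfolding frac_ideal_def by blast
  have E: "E \<in> Fbar D" using assms(2) unfolding frac_ideal_def by blast
  have "c \<in> D" using c(1) one_in_star_D unfolding kcolon_def by force
  have "smul d E \<subseteq> star D"
    using d(3) star_extensive[OF subring_Fbar[OF subring_D]] by blast
  then have "smul d (star E) \<subseteq> star D"
    by (rule smul_star_subset[OF E subring_Fbar[OF subring_D]])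
  then have "smul (c * d) (star E) \<subseteq> D"
    using c(1) unfolding smul_def kcolon_def by (auto simp: mult.assoc)
  moreover have "c * d \<in> D" "c * d \<noteq> 0"
    using subringD(5)[OF subring_D \<open>c \<in> D\<close> d(1)] c(2) d(2) by auto
  ultimately show ?thesis
    using star_Fbar[OF E] unfolding frac_ideal_def by blast
qed

section \<open>Overrings of a P*MD\<close>

lemma PMD_obtain_unit_ideal:
  assumes "PMD D star" "overring D T" "X \<in> fgmod T"
  obtains G where "G \<in> fgmod D" "G \<subseteq> D" "G \<subseteq> modprod X (kcolon T X)" "star G = star D"
proof -
  have T: "subring T" "D \<subseteq> T" using assms(2) unfolding overring_def by auto
  obtain S where S: "finite S" "X = gen T S" "X \<noteq> {0}" using assms(3) by (rule fgmodE)
  let ?F = "gen D S"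
  obtain s where "s \<in> S" "s \<noteq> 0"
    using S(2,3) submodD(1)[OF gen_submod[OF T(1)]] gen_nonzero by blast
  then have F: "?F \<in> fgmod D" by (rule gen_fgmod[OF S(1) subring_D])
  have "?F \<subseteq> X" using S(2) gen_mono_ring[OF T(2)] by simp
  moreover have "kcolon D ?F \<subseteq> kcolon T X"
    unfolding S(2) kcolon_gen[OF subring_D submod_subring[OF subring_D order.refl] S(1)]
      kcolon_gen[OF T(1) submod_subring[OF T(1) order.refl] S(1)]
    using T(2) by blast
  ultimately have sub: "modprod ?F (kcolon D ?F) \<subseteq> modprod X (kcolon T X)"
    by (rule modprod_mono)
  have "1 \<in> star_f D star (modprod ?F (kcolon D ?F))"
    using assms(1) F one_in_star_D unfolding PMD_def by simp
  then obtain G where G: "G \<in> fgmod D" "G \<subseteq> modprod ?F (kcolon D ?F)" "1 \<in> star G"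
    unfolding star_f_def by blast
  have "G \<subseteq> D" using G(2) modprod_kcolon_subset[OF subring_D] by blast
  moreover have "star G = star D"
    using star_eq_star_D[OF Fbar_if_fgmod[OF G(1)] calculation G(3)] .
  ultimately show ?thesis
    using that G(1,2) sub by blast
qed

lemma PMD_overring:
  assumes "PMD D star" "overring D T" shows "PMD T star"
  unfolding PMD_def
proof (intro allI impI)
  fix X assume X: "X \<in> fgmod T"
  let ?P = "modprod X (kcolon T X)"
  have T: "subring T" "D \<subseteq> T" using assms(2) unfolding overring_def by auto
  obtain G where G: "G \<in> fgmod D" "G \<subseteq> D" "G \<subseteq> ?P" "star G = star D"
    using PMD_obtain_unit_ideal[OF assms X] .
  obtain S where S: "finite S" "G = gen D S" using G(1) by (rule fgmodE)
  let ?H = "gen T S"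
  have H: "?H \<in> fgmod T"
    using gen_fgmod_extend[OF subring_D T(2) S(1)] G(1) S(2) by simp
  then have H_Fbar: "?H \<in> Fbar D" by (rule fgmod_Fbar[OF assms(2)])
  have "?H \<subseteq> ?P"
  proof (rule gen_least)
    show "submod T ?P" by (rule modprod_submod[OF fgmod_submod[OF T(1) X]])
    show "S \<subseteq> ?P" using gen_superset[OF subring_D S(1)] S(2) G(3) by blast
  qed
  have "1 \<in> star ?H"
    using star_mono[OF Fbar_if_fgmod[OF G(1)] H_Fbar] gen_mono_ring[OF T(2)] one_in_star_D G(4) S(2)
    by blast
  then have "T \<subseteq> star ?H"
    by (rule subset_star_if_one_in_star[OF gen_submod[OF T(1)] H_Fbar])
  then have "star T \<subseteq> star ?H"
    by (rule star_subset_star[OF overring_Fbar[OF assms(2)] H_Fbar])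
  also have "\<dots> \<subseteq> star_f T star ?P"
    unfolding star_f_def using H \<open>?H \<subseteq> ?P\<close> by blast
  finally have "star T \<subseteq> star_f T star ?P" .
  moreover have "star_f T star ?P \<subseteq> star T"
    unfolding star_f_def
    using fgmod_Fbar[OF assms(2)] modprod_kcolon_subset[OF T(1)]
      star_mono[OF _ overring_Fbar[OF assms(2)]] by blast
  ultimately show "star_f T star ?P = star T" by blast
qed

lemma PvMD_if_t_linked:
  assumes "PMD D star" "overring D T" "t_linked D star T" shows "PvMD T"
  unfolding PvMD_def PMD_def
proof (intro allI impI)
  fix X assume X: "X \<in> fgmod T"
  let ?P = "modprod X (kcolon T X)"
  have T: "subring T" "D \<subseteq> T" using assms(2) unfolding overring_def by auto
  obtain G where G: "G \<in> fgmod D" "G \<subseteq> D" "G \<subseteq> ?P" "star G = star D"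
    using PMD_obtain_unit_ideal[OF assms(1,2) X] .
  have "t_op T (modprod G T) = T"
    using assms(3) G t_op_ring[OF T(1)] unfolding t_linked_def by auto
  moreover have "modprod G T \<subseteq> ?P"
  proof (rule modprod_subset[OF modprod_submod[OF fgmod_submod[OF T(1) X]]])
    fix a b assume "a \<in> G" "b \<in> T"
    then have "b * a \<in> ?P"
      using submodD(3)[OF modprod_submod[OF fgmod_submod[OF T(1) X]]] G(3) by blast
    then show "a * b \<in> ?P" by (simp add: mult.commute)
  qed
  ultimately have "T \<subseteq> t_op T ?P" using t_op_mono by blast
  then have "t_op T ?P = T"
    using t_op_subset[OF T(1) modprod_kcolon_subset[OF T(1)]] by blast
  then show "star_f T (v_op T) ?P = v_op T T"
    by (simp add: t_op_def v_op_ring[OF T(1)])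
qed

lemma star_bracket_family:
  shows "{kcolon (star H) (star H) | H. H \<in> fgmod D} \<noteq> {}"
    and "upward_directed {kcolon (star H) (star H) | H. H \<in> fgmod D}"
    and "C \<in> {kcolon (star H) (star H) | H. H \<in> fgmod D} \<Longrightarrow> overring D C"
proof -
  let ?FF = "{kcolon (star H) (star H) | H. H \<in> fgmod D}"
  show "?FF \<noteq> {}" using fgmod_ring[OF subring_D] by blast
  show "upward_directed ?FF"
    unfolding upward_directed_def
  proof (intro ballI)
    fix A B assume "A \<in> ?FF" "B \<in> ?FF"
    then obtain H1 H2 where H: "A = kcolon (star H1) (star H1)" "B = kcolon (star H2) (star H2)"
      "H1 \<in> fgmod D" "H2 \<in> fgmod D"
      by blast
    let ?H = "modprod H1 H2"
    have "kcolon (star ?H) (star ?H) \<in> ?FF"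
      using fgmod_modprod[OF subring_D H(3,4)] by blast
    moreover have "A \<union> B \<subseteq> kcolon (star ?H) (star ?H)"
      using kcolon_star_subset_modprod[of H1 H2] kcolon_star_subset_modprod[of H2 H1]
        Fbar_if_fgmod[OF H(3)] Fbar_if_fgmod[OF H(4)]
      unfolding H(1,2) modprod_commute[of H2 H1] by blast
    ultimately show "\<exists>C\<in>?FF. A \<union> B \<subseteq> C" by blast
  qed
  show "overring D C" if "C \<in> ?FF"
    using that star_submod Fbar_if_fgmod overring_kcolon_self[OF subring_D] by blast
qed

lemma overring_star_bracket: "overring D (star_bracket D star)"
  unfolding star_bracket_def by (rule overring_Union_directed[OF star_bracket_family])

lemma t_linked_star_bracket: "t_linked D star (star_bracket D star)"
  unfolding star_bracket_def
proof (rule t_linked_Union_directed[OF subring_D star_bracket_family])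
  fix C G assume C: "C \<in> {kcolon (star H) (star H) | H. H \<in> fgmod D}"
    and G: "G \<in> fgmod D" "G \<subseteq> D" "star G = star D"
  then obtain H where H: "C = kcolon (star H) (star H)" "H \<in> fgmod D" by blast
  have "kcolon C G \<subseteq> C"
    unfolding H(1) using G(3) one_in_star_D
    by (intro kcolon_kcolon_star_subset Fbar_if_fgmod G(1) H(2)) simp
  with C show "\<exists>C'\<in>{kcolon (star H) (star H) | H. H \<in> fgmod D}. kcolon C G \<subseteq> C'" by blast
qed

lemma t_linked_cic:
  assumes "kcolon D (star D) \<noteq> {0}" shows "t_linked D star (cic D)"
  unfolding cic_def
proof (rule t_linked_Union_directed[OF subring_D cic_family[OF subring_D]])
  fix C G assume "C \<in> {kcolon E E | E. frac_ideal D E}"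
    and G: "G \<in> fgmod D" "G \<subseteq> D" "star G = star D"
  then obtain E where E: "C = kcolon E E" "frac_ideal D E" by blast
  have E_Fbar: "E \<in> Fbar D" using E(2) unfolding frac_ideal_def by blast
  have G_Fbar: "G \<in> Fbar D" by (rule Fbar_if_fgmod[OF G(1)])
  let ?C' = "kcolon (star E) (star E)"
  have "kcolon C G \<subseteq> kcolon ?C' G"
    unfolding E(1) by (intro kcolon_mono kcolon_subset_kcolon_star E_Fbar)
  also have "\<dots> \<subseteq> ?C'"
    using G(3) one_in_star_D by (intro kcolon_kcolon_star_subset G_Fbar E_Fbar) simp
  finally show "\<exists>C'\<in>{kcolon E E | E. frac_ideal D E}. kcolon C G \<subseteq> C'"
    using frac_ideal_star[OF assms E(2)] by blast
qed

end

theorem corollary5p5: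
  fixes D :: "'a::field set" and star :: "'a set \<Rightarrow> 'a set"
  assumes "subring D" and "quotient_field_of D"
    and "semistar D star"
    and "PMD D star"
  shows "(\<forall>T. overring D T \<longrightarrow> PMD T star)
    \<and> (\<forall>T. overring D T \<and> t_linked D star T \<longrightarrow> PvMD T)
    \<and> PvMD (star_bracket D star)
    \<and> (kcolon D (star D) \<noteq> {0} \<longrightarrow> PvMD (cic D))"
proof -
  interpret semistar_domain D star
    using assms(1,3) by unfold_locales
  have "PvMD (star_bracket D star)"
    by (rule PvMD_if_t_linked[OF assms(4) overring_star_bracket t_linked_star_bracket])
  moreover have "PvMD (cic D)" if "kcolon D (star D) \<noteq> {0}"
    by (rule PvMD_if_t_linked[OF assms(4) overring_cic[OF assms(1)] t_linked_cic[OF that]])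
  ultimately show ?thesis
    using PMD_overring[OF assms(4)] PvMD_if_t_linked[OF assms(4)] by blast
qed

end
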